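(* Let $0<\theta<\pi$ and $L\ge I(\theta)+\log 2$, where $I(\vartheta)=2\log\sec(\vartheta/2)$. Let $\triangle ABC$ be a geodesic triangle in hyperbolic space with $|CA|>L$, $|CB|>L$ and $\angle C=\pi-\theta$. Then (1) $\angle A+\angle B<e^{(-L+3\log2)/2}\sin(\theta/2)$; (2) $I(\theta)-\dfrac{e^{(-L+5\log 2)/2}\sin(\theta/2)}{L-\log 2}<|CA|+|CB|-|AB|<I(\theta)$. *)

theory Defs
  imports "HOL-Analysis.Analysis"
begin

text \<open>Hyperboloid model of hyperbolic n-space H^n inside Minkowski space R^(n,1),
  points written as (spatial part, time coordinate).\<close>

definition mink :: "((real^'n) \<times> real) \<Rightarrow> ((real^'n) \<times> real) \<Rightarrow> real" where
  "mink p q = fst p \<bullet> fst q - snd p * snd q"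

definition hyp_space :: "((real^'n) \<times> real) set" where
  "hyp_space = {p. mink p p = -1 \<and> snd p > 0}"

definition hdist :: "((real^'n) \<times> real) \<Rightarrow> ((real^'n) \<times> real) \<Rightarrow> real" where
  "hdist p q = arcosh (- mink p q)"

text \<open>Riemannian angle at vertex P between the geodesics from P to Q and from P to R:
  angle between the initial tangent vectors, obtained by projecting Q, R onto the
  tangent space at P (Minkowski-orthogonal complement of P).\<close>
definition hangle :: "((real^'n) \<times> real) \<Rightarrow> ((real^'n) \<times> real) \<Rightarrow> ((real^'n) \<times> real) \<Rightarrow> real" where
  "hangle P Q R =
     (let u = Q + mink Q P *\<^sub>R P; v = R + mink R P *\<^sub>R P
      in arccos (mink u v / sqrt (mink u u * mink v v)))"

definition Ifun :: "real \<Rightarrow> real" where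
  "Ifun \<theta> = 2 * ln (1 / cos (\<theta> / 2))"

end

theory Submission
  imports Defs
begin

text \<open>
  Write a = |CB|, b = |CA|, c = |AB| and k = cos^2(theta/2), so that I(theta) = - log k.
  The hyperbolic law of cosines at C becomes cosh c = k cosh(a + b) + (1 - k) cosh(a - b).
  As e^c is the root t \<ge> 1 of t + 1/t = 2 cosh c, this squeezes e^c between k e^(a+b) and
  k e^(a+b) + 2(1 - k) cosh(a - b); taking logarithms bounds the excess a + b - c from both
  sides, up to an error of order tan^2(theta/2) e^(-2L).
  For the base angles alpha, beta the laws of sines and cosines give
  tan((alpha + beta)/2) = tan(theta/2) (sinh a + sinh b) / sinh(a + b),
  which is less than tan(theta/2) (e^(-a) + e^(-b)); since x \<le> tan x below pi/2, the angle sum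
  is of order tan(theta/2) e^(-L).
\<close>

section \<open>Distance and angle in the hyperboloid model\<close>

lemma mink_commute: "mink p q = mink q p"
  by (simp add: mink_def inner_commute mult.commute)

lemma mink_add_left: "mink (p + q) r = mink p r + mink q r"
  by (simp add: mink_def inner_add_left algebra_simps)

lemma mink_add_right: "mink r (p + q) = mink r p + mink r q"
  by (metis mink_commute mink_add_left)

lemma mink_scaleR_left: "mink (c *\<^sub>R p) r = c * mink p r"
  by (simp add: mink_def algebra_simps)

lemma mink_scaleR_right: "mink r (c *\<^sub>R p) = c * mink r p"
  by (metis mink_commute mink_scaleR_left)

lemmas mink_bilinear = mink_add_left mink_add_right mink_scaleR_left mink_scaleR_right

lemma mink_self_hyp_space: "P \<in> hyp_space \<Longrightarrow> mink P P = -1"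
  by (simp add: hyp_space_def)

lemma hyp_space_time_sq: "(x, s) \<in> hyp_space \<Longrightarrow> s\<^sup>2 = 1 + (norm x)\<^sup>2 \<and> 0 < s"
  by (auto simp: hyp_space_def mink_def dot_square_norm power2_eq_square)

lemma mink_hyp_space_le:
  assumes "P \<in> hyp_space" "Q \<in> hyp_space"
  shows "mink P Q \<le> -1"
proof -
  obtain x s y t where P: "P = (x, s)" and Q: "Q = (y, t)" by (cases P, cases Q)
  have s: "s\<^sup>2 = 1 + (norm x)\<^sup>2" "0 < s" and t: "t\<^sup>2 = 1 + (norm y)\<^sup>2" "0 < t"
    using assms hyp_space_time_sq unfolding P Q by blast+
  have "(1 + norm x * norm y)\<^sup>2 \<le> (1 + (norm x)\<^sup>2) * (1 + (norm y)\<^sup>2)"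
    using zero_le_power2[of "norm x - norm y"] by (simp add: power2_eq_square algebra_simps)
  also have "\<dots> = (s * t)\<^sup>2"
    using s t by (simp add: power_mult_distrib)
  finally have "(1 + norm x * norm y)\<^sup>2 \<le> (s * t)\<^sup>2" .
  moreover have "0 \<le> s * t"
    using s(2) t(2) by simp
  ultimately have "1 + norm x * norm y \<le> s * t"
    by (rule power2_le_imp_le)
  moreover have "x \<bullet> y \<le> norm x * norm y"
    by (rule norm_cauchy_schwarz)
  ultimately show ?thesis
    unfolding P Q mink_def by simp
qed

lemma mink_self_nonneg_orthogonal:
  assumes "P \<in> hyp_space" "mink w P = 0"
  shows "0 \<le> mink w w"
proof -
  obtain p s x t where P: "P = (p, s)" and w: "w = (x, t)" by (cases P, cases w)
  have s: "s\<^sup>2 = 1 + (norm p)\<^sup>2" "0 < s"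
    using assms(1) hyp_space_time_sq unfolding P by blast+
  have "(norm p)\<^sup>2 < s\<^sup>2"
    using s(1) by simp
  then have "norm p < s"
    using s(2) by (simp add: power2_less_imp_less)
  have "\<bar>t\<bar> * s = \<bar>x \<bullet> p\<bar>"
    using assms(2) s(2) unfolding P w mink_def by (simp add: abs_mult)
  also have "\<dots> \<le> norm x * norm p"
    by (rule Cauchy_Schwarz_ineq2)
  also have "\<dots> \<le> norm x * s"
    using \<open>norm p < s\<close> by (simp add: mult_left_mono)
  finally have "\<bar>t\<bar> \<le> norm x"
    using s(2) by simp
  then have "t\<^sup>2 \<le> (norm x)\<^sup>2"
    by (metis abs_ge_zero power_mono power2_abs)
  then show ?thesis
    unfolding w mink_def by (simp add: dot_square_norm power2_eq_square)
qed

lemma nonneg_quadratic_imp_discrim_le: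
  fixes A B C :: real
  assumes "\<And>l. 0 \<le> A + 2 * B * l + C * l\<^sup>2" "0 \<le> C"
  shows "B\<^sup>2 \<le> A * C"
proof (cases "C = 0")
  case True
  have "B = 0"
  proof (rule ccontr)
    assume "B \<noteq> 0"
    then show False
      using assms(1)[of "- (\<bar>A\<bar> + 1) / (2 * B)"] True by simp
  qed
  then show ?thesis
    using True by simp
next
  case False
  then have "0 < C"
    using assms(2) by simp
  then show ?thesis
    using assms(1)[of "- B / C"] by (simp add: field_simps power2_eq_square)
qed

lemma mink_Cauchy_Schwarz_orthogonal:
  assumes "P \<in> hyp_space" "mink u P = 0" "mink v P = 0"
  shows "(mink u v)\<^sup>2 \<le> mink u u * mink v v"
proof (rule nonneg_quadratic_imp_discrim_le)
  fix l
  have "mink (u + l *\<^sub>R v) P = 0"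
    using assms by (simp add: mink_bilinear)
  then have "0 \<le> mink (u + l *\<^sub>R v) (u + l *\<^sub>R v)"
    by (rule mink_self_nonneg_orthogonal[OF assms(1)])
  then show "0 \<le> mink u u + 2 * mink u v * l + mink v v * l\<^sup>2"
    by (simp add: mink_bilinear mink_commute[of v u] power2_eq_square algebra_simps)
next
  show "0 \<le> mink v v"
    using assms(1,3) by (rule mink_self_nonneg_orthogonal)
qed

lemma cosh_hdist:
  assumes "P \<in> hyp_space" "Q \<in> hyp_space"
  shows "cosh (hdist P Q) = - mink P Q"
  using mink_hyp_space_le[OF assms] by (simp add: hdist_def)

lemma hdist_nonneg:
  assumes "P \<in> hyp_space" "Q \<in> hyp_space"
  shows "0 \<le> hdist P Q"
  using mink_hyp_space_le[OF assms] by (simp add: hdist_def)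

lemma hdist_commute: "hdist P Q = hdist Q P"
  by (simp add: hdist_def mink_commute)

lemma hangle_arccos:
  assumes "P \<in> hyp_space" "Q \<in> hyp_space" "R \<in> hyp_space"
  defines "x \<equiv> (cosh (hdist P Q) * cosh (hdist P R) - cosh (hdist Q R))
                / (sinh (hdist P Q) * sinh (hdist P R))"
  shows "hangle P Q R = arccos x" and "\<bar>x\<bar> \<le> 1"
proof -
  define u where "u = Q + mink Q P *\<^sub>R P"
  define v where "v = R + mink R P *\<^sub>R P"
  have PP: "mink P P = -1"
    using assms(1) by (rule mink_self_hyp_space)
  have "mink u P = 0" "mink v P = 0"
    unfolding u_def v_def using PP by (simp_all add: mink_bilinear)
  then have cs: "(mink u v)\<^sup>2 \<le> mink u u * mink v v"
    using assms(1) mink_Cauchy_Schwarz_orthogonal by blast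
  have "mink u v = mink Q R + mink Q P * mink R P"
    unfolding u_def v_def using PP
    by (simp add: mink_bilinear mink_commute[of P R] mink_commute[of P Q] algebra_simps)
  also have "\<dots> = cosh (hdist P Q) * cosh (hdist P R) - cosh (hdist Q R)"
    using cosh_hdist[OF assms(1,2)] cosh_hdist[OF assms(1,3)] cosh_hdist[OF assms(2,3)]
    by (simp add: mink_commute[of P R] mink_commute[of P Q])
  finally have uv: "mink u v = cosh (hdist P Q) * cosh (hdist P R) - cosh (hdist Q R)" .
  have "mink u u = (mink Q P)\<^sup>2 - 1" "mink v v = (mink R P)\<^sup>2 - 1"
    unfolding u_def v_def using PP mink_self_hyp_space[OF assms(2)] mink_self_hyp_space[OF assms(3)]
    by (simp_all add: mink_bilinear mink_commute[of P R] mink_commute[of P Q] algebra_simps power2_eq_square)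
  moreover have "mink Q P = - cosh (hdist P Q)" "mink R P = - cosh (hdist P R)"
    using cosh_hdist[OF assms(1,2)] cosh_hdist[OF assms(1,3)] by (simp_all add: mink_commute)
  ultimately have sq2: "mink u u * mink v v = (sinh (hdist P Q) * sinh (hdist P R))\<^sup>2"
    by (simp add: power_mult_distrib cosh_square_eq)
  then have sq: "sqrt (mink u u * mink v v) = sinh (hdist P Q) * sinh (hdist P R)"
    using hdist_nonneg[OF assms(1,2)] hdist_nonneg[OF assms(1,3)] by simp
  have x: "x = mink u v / sqrt (mink u u * mink v v)"
    unfolding x_def sq uv ..
  show "hangle P Q R = arccos x"
    unfolding hangle_def x Let_def u_def v_def ..
  have "\<bar>mink u v\<bar> \<le> sqrt (mink u u * mink v v)"
    using real_sqrt_le_mono[OF cs] by simp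
  then show "\<bar>x\<bar> \<le> 1"
    unfolding x sq2 by (auto simp: abs_divide divide_le_eq_1)
qed

lemma cos_hangle:
  assumes "P \<in> hyp_space" "Q \<in> hyp_space" "R \<in> hyp_space"
  shows "cos (hangle P Q R) = (cosh (hdist P Q) * cosh (hdist P R) - cosh (hdist Q R))
                              / (sinh (hdist P Q) * sinh (hdist P R))"
  using hangle_arccos[OF assms] by (simp add: cos_arccos_abs)

lemma hangle_bounds:
  assumes "P \<in> hyp_space" "Q \<in> hyp_space" "R \<in> hyp_space"
  shows "0 \<le> hangle P Q R" "hangle P Q R \<le> pi"
proof -
  note angle = hangle_arccos[OF assms]
  have "- 1 \<le> (cosh (hdist P Q) * cosh (hdist P R) - cosh (hdist Q R))
                / (sinh (hdist P Q) * sinh (hdist P R))"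
    using abs_le_D2[OF angle(2)] by linarith
  with abs_le_D1[OF angle(2)] show "0 \<le> hangle P Q R" "hangle P Q R \<le> pi"
    unfolding angle(1) by (simp_all add: arccos_lbound arccos_ubound)
qed

lemma hyperbolic_law_of_cosines:
  assumes "P \<in> hyp_space" "Q \<in> hyp_space" "R \<in> hyp_space"
    and "hdist P Q \<noteq> 0" "hdist P R \<noteq> 0"
  shows "cosh (hdist Q R)
    = cosh (hdist P Q) * cosh (hdist P R) - sinh (hdist P Q) * sinh (hdist P R) * cos (hangle P Q R)"
  using cos_hangle[OF assms(1-3)] assms(4,5) by (simp add: field_simps)

section \<open>The excess of the two long sides\<close>

lemma add_inverse_less_add_inverse_iff:
  fixes x y :: real
  assumes "1 \<le> x" "1 \<le> y"
  shows "x + 1 / x < y + 1 / y \<longleftrightarrow> x < y"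
proof -
  have diff: "y + 1 / y - (x + 1 / x) = (y - x) * (1 - 1 / (x * y))"
    using assms by (simp add: field_simps)
  have factor_nonneg: "0 \<le> 1 - 1 / (x * y)"
    using assms by (simp add: mult_ge1_I)
  show ?thesis
  proof
    assume less: "x + 1 / x < y + 1 / y"
    show "x < y"
    proof (rule ccontr)
      assume "\<not> x < y"
      then have "(y - x) * (1 - 1 / (x * y)) \<le> 0"
        using factor_nonneg by (intro mult_nonpos_nonneg) auto
      then show False
        using diff less by linarith
    qed
  next
    assume "x < y"
    then have "y \<le> x * y"
      using assms mult_right_mono[of 1 x y] by simp
    then have "1 < x * y"
      using assms \<open>x < y\<close> by linarith
    then have "0 < (y - x) * (1 - 1 / (x * y))"
      using \<open>x < y\<close> by simp
    then show "x + 1 / x < y + 1 / y"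
      using diff by linarith
  qed
qed

lemma less_exp_iff_cosh:
  fixes c t :: real
  assumes "0 \<le> c" "1 \<le> t"
  shows "t < exp c \<longleftrightarrow> t + 1 / t < 2 * cosh c"
proof -
  have "2 * cosh c = exp c + 1 / exp c"
    by (simp add: cosh_def exp_minus inverse_eq_divide)
  then show ?thesis
    using assms add_inverse_less_add_inverse_iff[of t "exp c"] by simp
qed

lemma cosh_law_half_angle:
  fixes a b \<theta> :: real
  shows "cosh a * cosh b + sinh a * sinh b * cos \<theta>
    = (cos (\<theta> / 2))\<^sup>2 * cosh (a + b) + (1 - (cos (\<theta> / 2))\<^sup>2) * cosh (a - b)"
proof -
  have cos_\<theta>: "cos \<theta> = 2 * (cos (\<theta> / 2))\<^sup>2 - 1"
    using cos_double_cos[of "\<theta> / 2"] by simp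
  show ?thesis
    unfolding cosh_add cosh_diff cos_\<theta> by (simp add: algebra_simps)
qed

lemma two_cosh_eq_exp_add:
  fixes k a b c :: real
  assumes "cosh c = k * cosh (a + b) + (1 - k) * cosh (a - b)"
  shows "2 * cosh c = k * exp (a + b) + k / exp (a + b) + 2 * (1 - k) * cosh (a - b)"
proof -
  have two_cosh: "2 * cosh (a + b) = exp (a + b) + 1 / exp (a + b)"
    by (simp add: cosh_def exp_minus exp_diff exp_add field_simps)
  have "2 * cosh c = k * (2 * cosh (a + b)) + 2 * (1 - k) * cosh (a - b)"
    using assms by simp
  also have "\<dots> = k * exp (a + b) + k / exp (a + b) + 2 * (1 - k) * cosh (a - b)"
    unfolding two_cosh by (simp add: algebra_simps)
  finally show ?thesis .
qed

lemma exp_side_lower_bound: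
  fixes k a b c :: real
  assumes k: "0 < k" "k < 1" and "0 \<le> c" and kT: "1 \<le> k * exp (a + b)"
    and law: "cosh c = k * cosh (a + b) + (1 - k) * cosh (a - b)"
  shows "k * exp (a + b) < exp c"
proof -
  define T where "T = exp (a + b)"
  have "1 / (k * T) - k / T = (1 - k) * ((1 + k) / (k * T))"
    using k unfolding T_def by (simp add: field_simps)
  also have "\<dots> \<le> (1 - k) * (1 + k)"
    using k kT unfolding T_def by (intro mult_left_mono) (auto simp: divide_le_eq)
  also have "\<dots> < (1 - k) * 2"
    using k by (intro mult_strict_left_mono) auto
  finally have "1 / (k * T) - k / T < (1 - k) * 2" .
  moreover have "(1 - k) * 1 \<le> (1 - k) * cosh (a - b)"
    using k cosh_real_ge_1[of "a - b"] by (intro mult_left_mono) auto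
  ultimately have "k * T + 1 / (k * T) < 2 * cosh c"
    using two_cosh_eq_exp_add[OF law] unfolding T_def by linarith
  then show ?thesis
    using less_exp_iff_cosh[OF \<open>0 \<le> c\<close> kT] unfolding T_def by simp
qed

lemma exp_side_upper_bound:
  fixes k a b c :: real
  assumes k: "0 < k" "k < 1" and "0 \<le> a" "0 \<le> b" "0 \<le> c" and kT: "1 \<le> k * exp (a + b)"
    and law: "cosh c = k * cosh (a + b) + (1 - k) * cosh (a - b)"
  shows "exp c \<le> k * exp (a + b) + 2 * (1 - k) * cosh (a - b)"
proof -
  define T where "T = exp (a + b)"
  define D where "D = cosh (a - b)"
  define t where "t = k * T + 2 * (1 - k) * D"
  have "exp (a - b) \<le> T" "exp (b - a) \<le> T"
    using \<open>0 \<le> a\<close> \<open>0 \<le> b\<close> unfolding T_def by simp_all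
  then have D: "1 \<le> D" "D \<le> T"
    unfolding D_def by (simp_all add: cosh_real_ge_1) (simp add: cosh_def)
  have t: "1 \<le> t"
    using kT k D unfolding t_def T_def by (simp add: add_increasing2)
  have "2 * k * (1 - k) * D \<le> 2 * k * (1 - k) * T"
    using k D by (intro mult_left_mono) auto
  then have "k * t \<le> k * k * T + 2 * k * (1 - k) * T"
    unfolding t_def by (simp add: algebra_simps)
  also have "\<dots> = (1 - (1 - k)\<^sup>2) * T"
    by (simp add: power2_eq_square algebra_simps)
  also have "\<dots> \<le> T"
    using D by (simp add: mult_le_cancel_right1)
  finally have "k / T \<le> 1 / t"
    using t D by (simp add: field_simps)
  then have "\<not> t + 1 / t < 2 * cosh c"
    using two_cosh_eq_exp_add[OF law] unfolding t_def T_def D_def by simp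
  then show ?thesis
    using less_exp_iff_cosh[OF \<open>0 \<le> c\<close> t] unfolding t_def T_def D_def by simp
qed

lemma two_cosh_diff: "2 * cosh (a - b) = exp (a + b) * (exp (- 2 * a) + exp (- 2 * b :: real))"
  unfolding cosh_def by (simp add: distrib_left algebra_simps flip: exp_add)

lemma ln_side_excess_bounds:
  fixes k a b c :: real
  assumes k: "0 < k" "k < 1" and "0 \<le> a" "0 \<le> b" "0 \<le> c" and kT: "1 \<le> k * exp (a + b)"
    and law: "cosh c = k * cosh (a + b) + (1 - k) * cosh (a - b)"
  shows "a + b - c < - ln k"
    and "c - a - b - ln k \<le> (1 - k) / k * (exp (- 2 * a) + exp (- 2 * b))"
proof -
  show "a + b - c < - ln k"
    using exp_side_lower_bound[OF k \<open>0 \<le> c\<close> kT law] k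
      ln_less_cancel_iff[of "k * exp (a + b)" "exp c"]
    by (simp add: ln_mult)
  have "c - a - b - ln k = ln (exp c / (k * exp (a + b)))"
    using k by (simp add: ln_div ln_mult)
  also have "\<dots> \<le> exp c / (k * exp (a + b)) - 1"
    using k by (intro ln_le_minus_one) simp
  also have "\<dots> = (exp c - k * exp (a + b)) / (k * exp (a + b))"
    using k by (simp add: diff_divide_distrib)
  also have "\<dots> \<le> (1 - k) * (2 * cosh (a - b)) / (k * exp (a + b))"
    using exp_side_upper_bound[OF assms] k by (intro divide_right_mono) (simp_all add: algebra_simps)
  also have "\<dots> = (1 - k) / k * (exp (- 2 * a) + exp (- 2 * b))"
    unfolding two_cosh_diff using k by (simp add: field_simps)
  finally show "c - a - b - ln k \<le> (1 - k) / k * (exp (- 2 * a) + exp (- 2 * b))" .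
qed

lemma cos_half_sq_bounds:
  fixes \<theta> :: real
  assumes "0 < \<theta>" "\<theta> < pi"
  shows "0 < (cos (\<theta> / 2))\<^sup>2" "(cos (\<theta> / 2))\<^sup>2 < 1"
proof -
  have "0 < cos (\<theta> / 2)" "0 < sin (\<theta> / 2)"
    using assms by (auto intro: cos_gt_zero_pi sin_gt_zero)
  then have "0 < (sin (\<theta> / 2))\<^sup>2"
    by simp
  then show "(cos (\<theta> / 2))\<^sup>2 < 1"
    using cos_squared_eq[of "\<theta> / 2"] by linarith
  show "0 < (cos (\<theta> / 2))\<^sup>2"
    using \<open>0 < cos (\<theta> / 2)\<close> by simp
qed

lemma Ifun_eq_minus_ln_cos_sq:
  fixes \<theta> :: real
  assumes "0 < \<theta>" "\<theta> < pi"
  shows "Ifun \<theta> = - ln ((cos (\<theta> / 2))\<^sup>2)"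
proof -
  have "0 < cos (\<theta> / 2)"
    using assms by (intro cos_gt_zero_pi) auto
  then show ?thesis
    unfolding Ifun_def by (simp add: ln_div ln_realpow)
qed

lemma two_le_cos_sq_mult_exp:
  fixes \<theta> L :: real
  assumes "0 < \<theta>" "\<theta> < pi" "Ifun \<theta> + ln 2 \<le> L"
  shows "2 \<le> (cos (\<theta> / 2))\<^sup>2 * exp L"
proof -
  have k: "0 < (cos (\<theta> / 2))\<^sup>2"
    using cos_half_sq_bounds[OF assms(1,2)] by simp
  have "ln 2 \<le> ln ((cos (\<theta> / 2))\<^sup>2) + L"
    using assms Ifun_eq_minus_ln_cos_sq[OF assms(1,2)] by simp
  also have "\<dots> = ln ((cos (\<theta> / 2))\<^sup>2 * exp L)"
    using k by (simp add: ln_mult)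
  finally show ?thesis
    using k by simp
qed

lemma ln_two_less_of_two_le_cos_sq_mult_exp:
  fixes \<theta> L :: real
  assumes "0 < \<theta>" "\<theta> < pi" "2 \<le> (cos (\<theta> / 2))\<^sup>2 * exp L"
  shows "ln 2 < L"
proof -
  have "(cos (\<theta> / 2))\<^sup>2 * exp L < exp L"
    using cos_half_sq_bounds[OF assms(1,2)] by simp
  then have "2 < exp L"
    using assms(3) by linarith
  then show ?thesis
    using ln_less_cancel_iff[of 2 "exp L"] by simp
qed

lemma side_excess_bounds:
  fixes \<theta> L a b c :: real
  assumes "0 < \<theta>" "\<theta> < pi" and kL: "2 \<le> (cos (\<theta> / 2))\<^sup>2 * exp L"
    and "L < a" "L < b" "0 \<le> c"
    and law: "cosh c = cosh a * cosh b + sinh a * sinh b * cos \<theta>"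
  shows "a + b - c < Ifun \<theta>"
    and "Ifun \<theta> - 2 * (tan (\<theta> / 2))\<^sup>2 * exp (- 2 * L) < a + b - c"
proof -
  define k where "k = (cos (\<theta> / 2))\<^sup>2"
  have k: "0 < k" "k < 1"
    unfolding k_def using cos_half_sq_bounds[OF assms(1,2)] by simp_all
  have I: "Ifun \<theta> = - ln k"
    unfolding k_def using assms(1,2) by (rule Ifun_eq_minus_ln_cos_sq)
  have m: "(tan (\<theta> / 2))\<^sup>2 = (1 - k) / k"
    unfolding k_def tan_def power_divide sin_squared_eq ..
  have "0 < L"
    using ln_two_less_of_two_le_cos_sq_mult_exp[OF assms(1-3)] ln_gt_zero[of "2::real"] by linarith
  then have ab: "0 \<le> a" "0 \<le> b" and "k * exp L \<le> k * exp (a + b)"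
    using k \<open>L < a\<close> \<open>L < b\<close> by simp_all
  then have kT: "1 \<le> k * exp (a + b)"
    using kL unfolding k_def by simp
  have law_k: "cosh c = k * cosh (a + b) + (1 - k) * cosh (a - b)"
    using law unfolding cosh_law_half_angle k_def .
  note excess = ln_side_excess_bounds[OF k ab \<open>0 \<le> c\<close> kT law_k]
  show "a + b - c < Ifun \<theta>"
    using excess(1) I by simp
  have "exp (- 2 * a) + exp (- 2 * b) < 2 * exp (- 2 * L)"
    using \<open>L < a\<close> \<open>L < b\<close> exp_less_mono[of "- 2 * a" "- 2 * L"] exp_less_mono[of "- 2 * b" "- 2 * L"]
    by linarith
  then have "(1 - k) / k * (exp (- 2 * a) + exp (- 2 * b)) < (1 - k) / k * (2 * exp (- 2 * L))"
    using k by (intro mult_strict_left_mono) simp_all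
  then show "Ifun \<theta> - 2 * (tan (\<theta> / 2))\<^sup>2 * exp (- 2 * L) < a + b - c"
    using excess(2) unfolding I m by (simp add: algebra_simps)
qed

lemma side_error_le:
  fixes \<theta> L :: real
  assumes "0 < \<theta>" "\<theta> < pi" and kL: "2 \<le> (cos (\<theta> / 2))\<^sup>2 * exp L"
  shows "2 * (tan (\<theta> / 2))\<^sup>2 * exp (- 2 * L)
    \<le> exp ((- L + 5 * ln 2) / 2) * sin (\<theta> / 2) / (L - ln 2)"
proof -
  define s where "s = sin (\<theta> / 2)"
  define k where "k = (cos (\<theta> / 2))\<^sup>2"
  have s: "0 < s" "s \<le> 1"
    unfolding s_def using assms(1,2) by (auto intro: sin_gt_zero)
  have k: "0 < k"
    unfolding k_def using cos_half_sq_bounds[OF assms(1,2)] by simp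
  have L: "ln 2 < L"
    using ln_two_less_of_two_le_cos_sq_mult_exp[OF assms] .
  have "2 * (tan (\<theta> / 2))\<^sup>2 * exp (- 2 * L) = 2 / (k * exp L) * (s\<^sup>2 * exp (- L))"
    unfolding s_def k_def tan_def power_divide using k
    by (simp add: field_simps exp_minus flip: exp_add)
  also have "\<dots> \<le> s\<^sup>2 * exp (- L)"
    using kL k unfolding k_def by (intro mult_left_le_one_le) (simp_all add: divide_le_eq)
  also have "\<dots> \<le> exp ((- L + 5 * ln 2) / 2) * s / (L - ln 2)"
  proof -
    have "s\<^sup>2 * exp (- L) * (L - ln 2) \<le> s * exp (- L) * (2 * exp (L / 2))"
    proof (rule mult_mono)
      show "s\<^sup>2 * exp (- L) \<le> s * exp (- L)"
        using s by (simp add: power2_eq_square mult_left_le_one_le)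
      show "L - ln 2 \<le> 2 * exp (L / 2)"
        using exp_ge_add_one_self[of "L / 2"] ln_gt_zero[of "2::real"] by linarith
    qed (use s L in simp_all)
    also have "\<dots> = 2 * s * exp (- L / 2)"
      by (simp add: field_simps flip: exp_add)
    also have "\<dots> \<le> exp (5 * ln 2 / 2) * s * exp (- L / 2)"
    proof -
      have "exp (ln 2) \<le> exp (5 * ln 2 / (2::real))"
        using ln_gt_zero[of "2::real"] by (subst exp_le_cancel_iff) linarith
      then show ?thesis
        using s by (simp add: mult_right_mono)
    qed
    also have "\<dots> = exp ((- L + 5 * ln 2) / 2) * s"
      by (simp add: field_simps flip: exp_add)
    finally show ?thesis
      using L by (simp add: pos_le_divide_eq)
  qed
  finally show ?thesis
    unfolding s_def .
qed

section \<open>The base angles\<close>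

lemma add_le_two_sum_sin_div_sum_cos:
  fixes \<alpha> \<beta> :: real
  assumes "0 \<le> \<alpha>" "\<alpha> \<le> pi" "0 \<le> \<beta>" "\<beta> \<le> pi" and pos: "0 < cos \<alpha> + cos \<beta>"
  shows "\<alpha> + \<beta> \<le> 2 * ((sin \<alpha> + sin \<beta>) / (cos \<alpha> + cos \<beta>))"
proof -
  define \<phi> where "\<phi> = (\<alpha> + \<beta>) / 2"
  define \<delta> where "\<delta> = (\<alpha> - \<beta>) / 2"
  have "0 \<le> cos \<delta>"
    unfolding \<delta>_def using assms by (intro cos_ge_zero) auto
  moreover have cos_sum: "cos \<alpha> + cos \<beta> = 2 * cos \<phi> * cos \<delta>"
    unfolding \<phi>_def \<delta>_def by (rule cos_plus_cos)
  ultimately have "0 < cos \<phi>" "0 < cos \<delta>"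
    using pos by (auto simp: zero_less_mult_iff)
  have "\<phi> < pi / 2"
  proof (rule ccontr)
    assume "\<not> \<phi> < pi / 2"
    then have "cos \<phi> \<le> cos (pi / 2)"
      unfolding \<phi>_def using assms by (intro cos_monotone_0_pi_le) auto
    then show False
      using \<open>0 < cos \<phi>\<close> by simp
  qed
  have "(sin \<alpha> + sin \<beta>) / (cos \<alpha> + cos \<beta>) = tan \<phi>"
    unfolding sin_plus_sin cos_sum tan_def \<phi>_def[symmetric] \<delta>_def[symmetric]
    using \<open>0 < cos \<delta>\<close> by simp
  moreover have "\<phi> \<le> tan \<phi>"
  proof -
    have "0 \<le> \<phi>"
      unfolding \<phi>_def using assms by simp
    then have "\<phi> = arctan (tan \<phi>)"
      using \<open>\<phi> < pi / 2\<close> by (simp add: arctan_tan)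
    also have "\<dots> \<le> tan \<phi>"
      using \<open>0 \<le> \<phi>\<close> \<open>\<phi> < pi / 2\<close> by (intro arctan_le_self tan_pos_pi2_le)
    finally show ?thesis .
  qed
  ultimately show ?thesis
    unfolding \<phi>_def by simp
qed

lemma hyperbolic_law_of_sines:
  fixes a b c \<theta> \<alpha> :: real
  assumes "0 \<le> a" "0 < b" "0 < c" "0 \<le> sin \<theta>" "0 \<le> \<alpha>" "\<alpha> \<le> pi"
    and law: "cosh c = cosh a * cosh b + sinh a * sinh b * cos \<theta>"
    and cos_\<alpha>: "cos \<alpha> = (cosh c * cosh b - cosh a) / (sinh c * sinh b)"
  shows "sin \<alpha> = sin \<theta> * sinh a / sinh c"
proof (rule power2_eq_imp_eq)
  have "(sinh c * sinh b)\<^sup>2 - (cosh c * cosh b - cosh a)\<^sup>2 = (sin \<theta> * sinh a * sinh b)\<^sup>2"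
    using law cosh_square_eq[of a] cosh_square_eq[of b] cosh_square_eq[of c] sin_squared_eq[of \<theta>]
    by algebra
  moreover have "0 < sinh b" "0 < sinh c"
    using assms by simp_all
  ultimately show "(sin \<alpha>)\<^sup>2 = (sin \<theta> * sinh a / sinh c)\<^sup>2"
    unfolding sin_squared_eq cos_\<alpha> by (simp add: field_simps power2_eq_square)
  show "0 \<le> sin \<alpha>" "0 \<le> sin \<theta> * sinh a / sinh c"
    using assms by (simp_all add: sin_ge_zero)
qed

lemma hyperbolic_cos_add_cos:
  fixes a b c \<theta> \<alpha> \<beta> :: real
  assumes "sinh a \<noteq> 0" "sinh b \<noteq> 0" "sinh c \<noteq> 0"
    and law: "cosh c = cosh a * cosh b + sinh a * sinh b * cos \<theta>"
    and cos_\<alpha>: "cos \<alpha> = (cosh c * cosh b - cosh a) / (sinh c * sinh b)"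
    and cos_\<beta>: "cos \<beta> = (cosh c * cosh a - cosh b) / (sinh c * sinh a)"
  shows "cos \<alpha> + cos \<beta> = (1 + cos \<theta>) * sinh (a + b) / sinh c"
proof -
  have "cos \<alpha> + cos \<beta>
      = (sinh a * (cosh c * cosh b - cosh a) + sinh b * (cosh c * cosh a - cosh b))
        / (sinh a * sinh b * sinh c)"
    unfolding cos_\<alpha> cos_\<beta> using assms(1-3) by (simp add: field_simps)
  also have "sinh a * (cosh c * cosh b - cosh a) + sinh b * (cosh c * cosh a - cosh b)
      = (1 + cos \<theta>) * sinh a * sinh b * sinh (a + b)"
    unfolding sinh_add using law cosh_square_eq[of a] cosh_square_eq[of b] by algebra
  finally show ?thesis
    using assms(1-3) by simp
qed

lemma sinh_add_sinh_less:
  fixes a b :: real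
  assumes "0 < a + b"
  shows "sinh a + sinh b < (exp (- a) + exp (- b)) * sinh (a + b)"
proof -
  have "(exp (- a) + exp (- b)) * sinh (a + b) - (sinh a + sinh b)
      = (exp (- a) + exp (- b)) * (1 - exp (- (a + b))) / 2"
    by (simp add: sinh_def exp_add exp_minus field_simps)
  moreover have "0 < (exp (- a) + exp (- b)) * (1 - exp (- (a + b))) / 2"
    using assms by (simp add: add_pos_pos)
  ultimately show ?thesis
    by linarith
qed

lemma base_angles_le:
  fixes \<theta> a b c \<alpha> \<beta> :: real
  assumes "0 < \<theta>" "\<theta> < pi" "0 < a" "0 < b" "0 < c"
    and law: "cosh c = cosh a * cosh b + sinh a * sinh b * cos \<theta>"
    and \<alpha>: "0 \<le> \<alpha>" "\<alpha> \<le> pi" "cos \<alpha> = (cosh c * cosh b - cosh a) / (sinh c * sinh b)"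
    and \<beta>: "0 \<le> \<beta>" "\<beta> \<le> pi" "cos \<beta> = (cosh c * cosh a - cosh b) / (sinh c * sinh a)"
  shows "\<alpha> + \<beta> \<le> 2 * tan (\<theta> / 2) * ((sinh a + sinh b) / sinh (a + b))"
proof -
  define q where "q = 1 + cos \<theta>"
  have "q = 2 * (cos (\<theta> / 2))\<^sup>2"
    unfolding q_def using cos_double_cos[of "\<theta> / 2"] by simp
  then have q_pos: "0 < q"
    using cos_half_sq_bounds[OF assms(1,2)] by simp
  have tan_half_\<theta>: "tan (\<theta> / 2) = sin \<theta> / q"
    unfolding q_def using tan_half[of "\<theta> / 2"] by (simp add: add.commute)
  have law': "cosh c = cosh b * cosh a + sinh b * sinh a * cos \<theta>"
    using law by (simp add: algebra_simps)
  have "0 < sin \<theta>"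
    using assms(1,2) by (rule sin_gt_zero)
  then have sin_sum: "sin \<alpha> + sin \<beta> = sin \<theta> * (sinh a + sinh b) / sinh c"
    using hyperbolic_law_of_sines[OF _ _ \<open>0 < c\<close> _ \<alpha>(1,2) law \<alpha>(3)]
      hyperbolic_law_of_sines[OF _ _ \<open>0 < c\<close> _ \<beta>(1,2) law' \<beta>(3)] assms(3,4)
    by (simp add: add_divide_distrib distrib_left)
  have cos_sum: "cos \<alpha> + cos \<beta> = q * sinh (a + b) / sinh c"
    unfolding q_def using hyperbolic_cos_add_cos[OF _ _ _ law \<alpha>(3) \<beta>(3)] assms(3-5) by simp
  have sinh_pos: "0 < sinh c" "0 < sinh (a + b)"
    using assms(3-5) by simp_all
  have "0 < cos \<alpha> + cos \<beta>"
    unfolding cos_sum using q_pos sinh_pos by simp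
  then have "\<alpha> + \<beta> \<le> 2 * ((sin \<alpha> + sin \<beta>) / (cos \<alpha> + cos \<beta>))"
    using \<alpha>(1,2) \<beta>(1,2) by (intro add_le_two_sum_sin_div_sum_cos)
  also have "\<dots> = 2 * tan (\<theta> / 2) * ((sinh a + sinh b) / sinh (a + b))"
    unfolding sin_sum cos_sum tan_half_\<theta> using q_pos sinh_pos by (simp add: field_simps)
  finally show ?thesis .
qed

lemma cosh_law_side_pos:
  fixes \<theta> a b c :: real
  assumes "0 < \<theta>" "\<theta> < pi" "0 < a + b" "0 \<le> c"
    and law: "cosh c = cosh a * cosh b + sinh a * sinh b * cos \<theta>"
  shows "0 < c"
proof -
  define k where "k = (cos (\<theta> / 2))\<^sup>2"
  have k: "0 < k" "k < 1"
    unfolding k_def using cos_half_sq_bounds[OF assms(1,2)] by simp_all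
  have "k * 1 < k * cosh (a + b)"
    using k assms(3) cosh_real_nonneg_less_iff[of 0 "a + b"] by simp
  moreover have "(1 - k) * 1 \<le> (1 - k) * cosh (a - b)"
    using k cosh_real_ge_1[of "a - b"] by (intro mult_left_mono) simp_all
  ultimately have "cosh 0 < cosh c"
    using law unfolding cosh_law_half_angle k_def[symmetric] by simp
  then show "0 < c"
    using \<open>0 \<le> c\<close> by (cases "c = 0") auto
qed

lemma base_angles_bound:
  fixes \<theta> L a b c \<alpha> \<beta> :: real
  assumes "0 < \<theta>" "\<theta> < pi" and kL: "2 \<le> (cos (\<theta> / 2))\<^sup>2 * exp L"
    and "L < a" "L < b" "0 \<le> c"
    and law: "cosh c = cosh a * cosh b + sinh a * sinh b * cos \<theta>"
    and \<alpha>: "0 \<le> \<alpha>" "\<alpha> \<le> pi" "cos \<alpha> = (cosh c * cosh b - cosh a) / (sinh c * sinh b)"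
    and \<beta>: "0 \<le> \<beta>" "\<beta> \<le> pi" "cos \<beta> = (cosh c * cosh a - cosh b) / (sinh c * sinh a)"
  shows "\<alpha> + \<beta> < 4 * tan (\<theta> / 2) * exp (- L)"
proof -
  have "0 < L"
    using ln_two_less_of_two_le_cos_sq_mult_exp[OF assms(1-3)] ln_gt_zero[of "2::real"] by linarith
  then have ab: "0 < a" "0 < b"
    using \<open>L < a\<close> \<open>L < b\<close> by simp_all
  then have "0 < c"
    using cosh_law_side_pos[OF assms(1,2) _ \<open>0 \<le> c\<close> law] by simp
  have tan_pos: "0 < 2 * tan (\<theta> / 2)"
    using assms(1,2) by (simp add: tan_gt_zero)
  have "\<alpha> + \<beta> \<le> 2 * tan (\<theta> / 2) * ((sinh a + sinh b) / sinh (a + b))"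
    using base_angles_le[OF assms(1,2) ab \<open>0 < c\<close> law \<alpha> \<beta>] .
  also have "\<dots> < 2 * tan (\<theta> / 2) * (exp (- a) + exp (- b))"
    using sinh_add_sinh_less[of a b] ab tan_pos
    by (intro mult_strict_left_mono) (simp_all add: divide_less_eq)
  also have "\<dots> < 2 * tan (\<theta> / 2) * (2 * exp (- L))"
  proof (rule mult_strict_left_mono)
    have "exp (- a) < exp (- L)" "exp (- b) < exp (- L)"
      using \<open>L < a\<close> \<open>L < b\<close> by simp_all
    then show "exp (- a) + exp (- b) < 2 * exp (- L)"
      by linarith
  qed (rule tan_pos)
  finally show ?thesis
    by simp
qed

lemma exp_three_ln_two: "exp (3 * ln 2) = (8::real)"
  using exp_of_nat_mult[of 3 "ln (2::real)"] by simp

lemma angle_error_le: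
  fixes \<theta> L :: real
  assumes "0 < \<theta>" "\<theta> < pi" and kL: "2 \<le> (cos (\<theta> / 2))\<^sup>2 * exp L"
  shows "4 * tan (\<theta> / 2) * exp (- L) \<le> exp ((- L + 3 * ln 2) / 2) * sin (\<theta> / 2)"
proof -
  define c where "c = cos (\<theta> / 2)"
  define R where "R = exp ((- L + 3 * ln 2) / 2)"
  have c: "0 < c"
    unfolding c_def using assms(1,2) by (intro cos_gt_zero_pi) auto
  have "R\<^sup>2 = exp (- L + 3 * ln 2)"
    unfolding R_def by (simp flip: exp_of_nat_mult)
  also have "\<dots> = 8 / exp L"
    by (simp add: exp_diff exp_three_ln_two)
  finally have R2: "R\<^sup>2 = 8 / exp L" .
  have "(4 / (c * exp L))\<^sup>2 = 16 / (c\<^sup>2 * exp L * exp L)"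
    by (simp add: power2_eq_square field_simps)
  also have "\<dots> \<le> 8 / exp L"
    using kL c unfolding c_def[symmetric] by (simp add: field_simps)
  finally have "4 / (c * exp L) \<le> R"
    unfolding R2[symmetric] by (rule power2_le_imp_le) (simp add: R_def)
  then have "sin (\<theta> / 2) * (4 / (c * exp L)) \<le> sin (\<theta> / 2) * R"
    using assms(1,2) sin_ge_zero[of "\<theta> / 2"] by (intro mult_left_mono) auto
  then show ?thesis
    unfolding R_def c_def tan_def by (simp add: exp_minus field_simps)
qed

theorem mainTheorem11:
  fixes A B C :: "(real^'n) \<times> real" and \<theta> L :: real
  assumes "0 < \<theta>" and "\<theta> < pi"
    and "L \<ge> Ifun \<theta> + ln 2"
    and "A \<in> hyp_space" and "B \<in> hyp_space" and "C \<in> hyp_space"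
    and "hdist C A > L" and "hdist C B > L"
    and "hangle C A B = pi - \<theta>"
  shows "hangle A B C + hangle B A C < exp ((- L + 3 * ln 2) / 2) * sin (\<theta> / 2)
    \<and> Ifun \<theta> - exp ((- L + 5 * ln 2) / 2) * sin (\<theta> / 2) / (L - ln 2)
           < hdist C A + hdist C B - hdist A B
    \<and> hdist C A + hdist C B - hdist A B < Ifun \<theta>"
proof -
  define a b c where "a = hdist C B" and "b = hdist C A" and "c = hdist A B"
  have kL: "2 \<le> (cos (\<theta> / 2))\<^sup>2 * exp L"
    using assms(1-3) by (rule two_le_cos_sq_mult_exp)
  have "0 < L"
    using ln_two_less_of_two_le_cos_sq_mult_exp[OF assms(1,2) kL] ln_gt_zero[of "2::real"] by linarith
  have sides: "L < a" "L < b" "0 \<le> c"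
    unfolding a_def b_def c_def using assms(7,8) hdist_nonneg[OF assms(4,5)] by simp_all
  have "cosh c = cosh b * cosh a - sinh b * sinh a * cos (pi - \<theta>)"
    using hyperbolic_law_of_cosines[OF assms(6,4,5)] assms(9) sides \<open>0 < L\<close>
    unfolding a_def b_def c_def by simp
  then have law: "cosh c = cosh a * cosh b + sinh a * sinh b * cos \<theta>"
    by simp
  have "hangle A B C + hangle B A C < 4 * tan (\<theta> / 2) * exp (- L)"
    using base_angles_bound[OF assms(1,2) kL sides law]
      hangle_bounds[OF assms(4,5,6)] hangle_bounds[OF assms(5,4,6)]
      cos_hangle[OF assms(4,5,6)] cos_hangle[OF assms(5,4,6)]
    unfolding a_def b_def c_def by (simp add: hdist_commute)
  moreover note angle_error_le[OF assms(1,2) kL]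
  moreover note side_excess_bounds[OF assms(1,2) kL sides law] side_error_le[OF assms(1,2) kL]
  ultimately show ?thesis
    unfolding a_def b_def c_def by linarith
qed

end
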